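(* Let $\delta\in(0,1)$, $\ell\in\mathbb N$, let $\mu$ be a distribution over $\{0,1\}^n$ and $\xi$ a $(\delta,\ell)$-robust detailing of $\mu$ with respect to a finite set $A$. Let $B$ be a finite set with $|B|\le\ell$, let $\xi'$ be a refinement of $\xi$ with respect to $B$, let $\eta=\xi'|_{2,3}$ (a distribution over $A\times B$), and let $\xi_{\langle\eta\rangle}$ be the flat refinement of $\xi$ with respect to $\eta$. Let $\Lambda'$ and $\Lambda_{\langle B\rangle}$ be the type distributions of $\xi'$ and $\xi_{\langle\eta\rangle}$ respectively (as detailings with respect to $A\times B$). Then $d^\eta_{EM}(\Lambda',\Lambda_{\langle B\rangle})\le\sqrt\delta$.
   Context: A detailing of $\mu$ w.r.t. a finite set $C$ is a distribution $\zeta$ over $\{0,1\}^n\times C$ with first marginal $\mu$; its type of $i\in[n]$ is $t_i\in[0,1]^C$, $t_i(c)=\Pr_{x\sim\zeta|_1^{2:c}}[x_i=1]$ when $\zeta|_2(c)>0$ (conditioning on second coordinate $c$) and $0$ otherwise; its type distribution is the law of $t_{\mathbf i}$, $\mathbf i$ uniform in $[n]$. Its index is $\mathrm{Ind}(\zeta)=\mathbb{E}_{i\sim[n]}\mathbb{E}_{c\sim\zeta|_2}[t_i(c)^2]$. A refinement of $\xi$ (over $\{0,1\}^n\times A$) with respect to $B$ is a distribution $\xi'$ over $\{0,1\}^n\times A\times B$ with $\xi'|_{1,2}=\xi$, viewed as a detailing of $\mu$ w.r.t. $A\times B$. $\xi$ is $(\delta,\ell)$-robust if $\mathrm{Ind}(\xi')\le\mathrm{Ind}(\xi)+\delta$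 for every finite $B$ with $|B|\le\ell$ and every refinement $\xi'$ of $\xi$ w.r.t. $B$. For a distribution $\eta$ on $A\times B$ with $\eta|_1=\xi|_2$, the flat refinement is $\xi_{\langle\eta\rangle}(x,a,b)=\xi(x,a)\cdot\eta|_2^{1:a}(b)$. For a distribution $\eta$ on a finite set $C$, $d^\eta_{\ell_1}(x,y)=\sum_c\eta(c)|x_c-y_c|$ on $[0,1]^C$, and $d^\eta_{EM}$ is the Earth Mover distance over it. *)

theory Defs
  imports "HOL-Probability.Probability"
begin

text \<open>Points of the cube are functions 'n \<Rightarrow> bool on a finite index type 'n (so [n] = UNIV).
A detailing w.r.t. C is a pmf on the cube times the type 'c whose second marginal is supported in C.\<close>

definition detailing :: "('n \<Rightarrow> bool) pmf \<Rightarrow> 'c set \<Rightarrow> (('n \<Rightarrow> bool) \<times> 'c) pmf \<Rightarrow> bool" where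
  "detailing \<mu> C \<zeta> \<longleftrightarrow> finite C \<and> map_pmf fst \<zeta> = \<mu> \<and> set_pmf (map_pmf snd \<zeta>) \<subseteq> C"

definition type_of :: "(('n \<Rightarrow> bool) \<times> 'c) pmf \<Rightarrow> 'n \<Rightarrow> 'c \<Rightarrow> real" where
  "type_of \<zeta> i c =
     (if pmf (map_pmf snd \<zeta>) c > 0
      then measure_pmf.prob (cond_pmf \<zeta> {p. snd p = c}) {p. fst p i}
      else 0)"

definition type_dist :: "(('n::finite \<Rightarrow> bool) \<times> 'c) pmf \<Rightarrow> ('c \<Rightarrow> real) pmf" where
  "type_dist \<zeta> = map_pmf (\<lambda>i. type_of \<zeta> i) (pmf_of_set (UNIV :: 'n set))"

definition Ind :: "(('n::finite \<Rightarrow> bool) \<times> 'c) pmf \<Rightarrow> real" where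
  "Ind \<zeta> = measure_pmf.expectation (pmf_of_set (UNIV :: 'n set))
             (\<lambda>i. measure_pmf.expectation (map_pmf snd \<zeta>) (\<lambda>c. (type_of \<zeta> i c)^2))"

text \<open>Refinement of \<xi> w.r.t. B; a pmf on ('n\<Rightarrow>bool) \<times> 'a \<times> 'b is literally a pmf on
('n\<Rightarrow>bool) \<times> ('a \<times> 'b), i.e. a detailing w.r.t. A \<times> B.\<close>
definition refinement :: "(('n \<Rightarrow> bool) \<times> 'a) pmf \<Rightarrow> 'b set \<Rightarrow> (('n \<Rightarrow> bool) \<times> 'a \<times> 'b) pmf \<Rightarrow> bool" where
  "refinement \<xi> B \<xi>' \<longleftrightarrow> finite B \<and> map_pmf (\<lambda>(x, a, b). (x, a)) \<xi>' = \<xi>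
      \<and> set_pmf (map_pmf (\<lambda>(x, a, b). b) \<xi>') \<subseteq> B"

text \<open>Robustness: every finite set B with |B| \<le> l is (up to relabelling) a finite set of naturals.\<close>
definition robust :: "real \<Rightarrow> nat \<Rightarrow> (('n::finite \<Rightarrow> bool) \<times> 'a) pmf \<Rightarrow> bool" where
  "robust \<delta> l \<xi> \<longleftrightarrow>
     (\<forall>(B :: nat set) (\<xi>' :: (('n \<Rightarrow> bool) \<times> 'a \<times> nat) pmf).
        finite B \<and> card B \<le> l \<and> refinement \<xi> B \<xi>' \<longrightarrow> Ind \<xi>' \<le> Ind \<xi> + \<delta>)"

definition flat_refinement :: "(('n \<Rightarrow> bool) \<times> 'a) pmf \<Rightarrow> ('a \<times> 'b) pmf \<Rightarrow> (('n \<Rightarrow> bool) \<times> 'a \<times> 'b) pmf" where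
  "flat_refinement \<xi> \<eta> =
     bind_pmf \<xi> (\<lambda>(x, a). map_pmf (\<lambda>(a', b). (x, a, b)) (cond_pmf \<eta> {p. fst p = a}))"

definition d_l1 :: "'c pmf \<Rightarrow> ('c \<Rightarrow> real) \<Rightarrow> ('c \<Rightarrow> real) \<Rightarrow> real" where
  "d_l1 \<eta> x y = (\<Sum>c\<in>set_pmf \<eta>. pmf \<eta> c * \<bar>x c - y c\<bar>)"

definition d_EM :: "('t \<Rightarrow> 't \<Rightarrow> real) \<Rightarrow> 't pmf \<Rightarrow> 't pmf \<Rightarrow> real" where
  "d_EM d P Q = Inf {measure_pmf.expectation \<gamma> (\<lambda>(x, y). d x y) | \<gamma>.
                      map_pmf fst \<gamma> = P \<and> map_pmf snd \<gamma> = Q}"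

end

theory Submission
  imports Defs
begin

text \<open>Robustness bounds the increase of the index from \<xi> to \<xi>' by \<delta>. The type of a
coordinate i in \<xi> at a is the \<eta>-conditional average of its types t'_i(a, b) in \<xi>', so
this increase is the mean squared deviation E_i E_(a,b)~\<eta> (t'_i(a, b) - t_i(a))^2
(Pythagoras). The flat refinement has type t_i(a) at (a, b), so coupling the types of the
same coordinate i in \<xi>' and in the flat refinement costs E_i E_\<eta> |t'_i(a, b) - t_i(a)|,
which by Cauchy-Schwarz is at most the square root of that increase.\<close>

lemma pmf_map_snd_eq_sum:
  fixes \<zeta> :: "('x::finite \<times> 'c) pmf"
  shows "pmf (map_pmf snd \<zeta>) c = (\<Sum>x\<in>UNIV. pmf \<zeta> (x, c))"
proof -
  have preimage: "snd -` {c} = range (\<lambda>x. (x, c))" by auto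
  have "pmf (map_pmf snd \<zeta>) c = sum (pmf \<zeta>) (range (\<lambda>x. (x, c)))"
    unfolding pmf_map preimage by (rule measure_measure_pmf_finite) simp
  also have "\<dots> = (\<Sum>x\<in>UNIV. pmf \<zeta> (x, c))"
    by (subst sum.reindex) (auto simp: inj_on_def)
  finally show ?thesis .
qed

lemma type_of_eq_sum:
  fixes \<zeta> :: "(('n::finite \<Rightarrow> bool) \<times> 'c) pmf"
  shows "type_of \<zeta> i c = (\<Sum>x | x i. pmf \<zeta> (x, c)) / pmf (map_pmf snd \<zeta>) c"
proof (cases "pmf (map_pmf snd \<zeta>) c > 0")
  case True
  let ?S = "{p. snd p = c}"
  have "c \<in> set_pmf (map_pmf snd \<zeta>)"
    using True by (subst set_pmf_iff) simp
  then have ne: "set_pmf \<zeta> \<inter> ?S \<noteq> {}" by auto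
  have "measure_pmf.prob (cond_pmf \<zeta> ?S) {p. fst p i}
      = measure_pmf.prob \<zeta> (?S \<inter> {p. fst p i}) / measure_pmf.prob \<zeta> ?S"
    using ne by (simp add: cond_pmf.rep_eq measure_pmf.emeasure_eq_measure measure_measure_pmf_not_zero)
  moreover have "?S \<inter> {p. fst p i} = (\<lambda>x. (x, c)) ` {x. x i}" by auto
  moreover have "measure_pmf.prob \<zeta> ?S = pmf (map_pmf snd \<zeta>) c"
    by (simp add: pmf_map vimage_def)
  ultimately show ?thesis
    using True by (simp add: type_of_def measure_measure_pmf_finite sum.reindex inj_on_def)
qed (use pmf_nonneg[of "map_pmf snd \<zeta>" c] in \<open>simp add: type_of_def\<close>)

lemma pmf_snd_mult_type_of:
  fixes \<zeta> :: "(('n::finite \<Rightarrow> bool) \<times> 'c) pmf"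
  shows "pmf (map_pmf snd \<zeta>) c * type_of \<zeta> i c = (\<Sum>x | x i. pmf \<zeta> (x, c))"
proof (cases "pmf (map_pmf snd \<zeta>) c = 0")
  case True
  then have "\<forall>x. pmf \<zeta> (x, c) = 0"
    by (simp add: pmf_map_snd_eq_sum sum_nonneg_eq_0_iff)
  with True show ?thesis by simp
qed (simp add: type_of_eq_sum)

lemma expectation_type_of_mult:
  fixes \<zeta> :: "(('n::finite \<Rightarrow> bool) \<times> 'c) pmf" and g :: "'c \<Rightarrow> real"
  assumes C: "finite C" "set_pmf (map_pmf snd \<zeta>) \<subseteq> C"
  shows "measure_pmf.expectation (map_pmf snd \<zeta>) (\<lambda>c. type_of \<zeta> i c * g c)
       = measure_pmf.expectation \<zeta> (\<lambda>p. if fst p i then g (snd p) else 0)"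
proof -
  have "measure_pmf.expectation (map_pmf snd \<zeta>) (\<lambda>c. type_of \<zeta> i c * g c)
      = (\<Sum>c\<in>C. g c * (pmf (map_pmf snd \<zeta>) c * type_of \<zeta> i c))"
    using C by (subst integral_measure_pmf_real[of C]) (auto simp: algebra_simps)
  also have "\<dots> = (\<Sum>c\<in>C. \<Sum>x\<in>UNIV. if x i then g c * pmf \<zeta> (x, c) else 0)"
    by (simp add: pmf_snd_mult_type_of sum_distrib_left sum.inter_filter[symmetric])
  also have "\<dots> = (\<Sum>p\<in>UNIV \<times> C. (if fst p i then g (snd p) else 0) * pmf \<zeta> p)"
    by (subst sum.swap) (auto simp: sum.cartesian_product intro!: sum.cong)
  also have "\<dots> = measure_pmf.expectation \<zeta> (\<lambda>p. if fst p i then g (snd p) else 0)"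
    using C by (subst integral_measure_pmf_real[of "UNIV \<times> C"]) force+
  finally show ?thesis .
qed

lemma pmf_flat_refinement:
  fixes \<xi> :: "(('n \<Rightarrow> bool) \<times> 'a) pmf" and \<eta> :: "('a \<times> 'b) pmf"
  assumes marg: "map_pmf fst \<eta> = map_pmf snd \<xi>"
  shows "pmf (flat_refinement \<xi> \<eta>) (x, a, b) = pmf \<xi> (x, a) * pmf \<eta> (a, b) / pmf (map_pmf snd \<xi>) a"
proof -
  define G where "G = (\<lambda>(x' :: 'n \<Rightarrow> bool, a'). map_pmf (\<lambda>(a'', b). (x', a', b)) (cond_pmf \<eta> {p. fst p = a'}))"
  have ne: "set_pmf \<eta> \<inter> {p. fst p = a'} \<noteq> {}" if "(x', a') \<in> set_pmf \<xi>" for x' a'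
  proof -
    have "a' \<in> set_pmf (map_pmf fst \<eta>)" using that unfolding marg by force
    then show ?thesis by auto
  qed
  have "pmf (flat_refinement \<xi> \<eta>) (x, a, b) = measure_pmf.expectation \<xi> (\<lambda>y. pmf (G y) (x, a, b))"
    unfolding flat_refinement_def G_def by (rule pmf_bind)
  also have "\<dots> = pmf (G (x, a)) (x, a, b) * pmf \<xi> (x, a)"
  proof (subst integral_measure_pmf_real[of "{(x, a)}"])
    fix y assume y: "y \<in> set_pmf \<xi>" "pmf (G y) (x, a, b) \<noteq> 0"
    then show "y \<in> {(x, a)}"
      using ne by (cases y) (auto simp: G_def set_pmf_iff[symmetric])
  qed simp_all
  also have "\<dots> = pmf \<xi> (x, a) * pmf \<eta> (a, b) / pmf (map_pmf snd \<xi>) a"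
  proof (cases "(x, a) \<in> set_pmf \<xi>")
    case True
    have "G (x, a) = map_pmf (\<lambda>(a'', b). (x, a'', b)) (cond_pmf \<eta> {p. fst p = a})"
      unfolding G_def by (auto intro!: map_pmf_cong simp: set_cond_pmf[OF ne[OF True]])
    then have "pmf (G (x, a)) (x, a, b) = pmf (cond_pmf \<eta> {p. fst p = a}) (a, b)"
      using pmf_map_inj'[of "\<lambda>(a'', b). (x, a'', b)" _ "(a, b)"] by (simp add: inj_def)
    also have "\<dots> = pmf \<eta> (a, b) / pmf (map_pmf snd \<xi>) a"
      using ne[OF True] by (simp add: pmf_cond marg[symmetric] pmf_map vimage_def)
    finally show ?thesis by simp
  qed (simp add: set_pmf_iff)
  finally show ?thesis .
qed

lemma type_of_flat_refinement:
  fixes \<xi> :: "(('n::finite \<Rightarrow> bool) \<times> 'a) pmf" and \<eta> :: "('a \<times> 'b) pmf"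
  assumes marg: "map_pmf fst \<eta> = map_pmf snd \<xi>" and ab: "(a, b) \<in> set_pmf \<eta>"
  shows "type_of (flat_refinement \<xi> \<eta>) i (a, b) = type_of \<xi> i a"
proof -
  have pos: "0 < pmf \<eta> (a, b)"
    using ab by (simp add: pmf_positive)
  have "a \<in> set_pmf (map_pmf fst \<eta>)"
    using ab by force
  then have pos_a: "0 < pmf (map_pmf snd \<xi>) a"
    unfolding marg by (simp add: pmf_positive)
  have "pmf (map_pmf snd (flat_refinement \<xi> \<eta>)) (a, b) = pmf \<eta> (a, b)"
    using pos_a by (simp add: pmf_map_snd_eq_sum pmf_flat_refinement[OF marg]
        sum_divide_distrib[symmetric] sum_distrib_right[symmetric])
  then show ?thesis
    using pos by (simp add: type_of_eq_sum pmf_flat_refinement[OF marg] pmf_map_snd_eq_sum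
        sum_divide_distrib[symmetric] sum_distrib_right[symmetric])
qed

lemma map_fst_snd_refinement:
  assumes "refinement \<xi> B \<xi>'"
  shows "map_pmf fst (map_pmf snd \<xi>') = map_pmf snd \<xi>"
proof -
  have proj: "map_pmf (\<lambda>(x, a, b). (x, a)) \<xi>' = \<xi>"
    using assms by (simp add: refinement_def)
  show ?thesis
    unfolding proj[symmetric] map_pmf_comp by (rule map_pmf_cong) auto
qed

lemma finite_set_pmf_snd_refinement:
  assumes "detailing \<mu> A \<xi>" "refinement \<xi> B \<xi>'"
  shows "finite (set_pmf (map_pmf snd \<xi>'))"
proof (rule finite_subset)
  show "set_pmf (map_pmf snd \<xi>') \<subseteq> A \<times> B"
    using assms map_fst_snd_refinement[OF assms(2)]
    unfolding detailing_def refinement_def by force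
  show "finite (A \<times> B)"
    using assms by (simp add: detailing_def refinement_def)
qed

lemma Ind_map_snd_inj:
  fixes \<zeta> :: "(('n::finite \<Rightarrow> bool) \<times> 'c) pmf" and g :: "'c \<Rightarrow> 'd"
  assumes inj: "inj_on g (set_pmf (map_pmf snd \<zeta>))"
  shows "Ind (map_pmf (\<lambda>(x, c). (x, g c)) \<zeta>) = Ind \<zeta>"
proof -
  let ?h = "\<lambda>(x, c). (x, g c)"
  have pmf_h: "pmf (map_pmf ?h \<zeta>) (x, g c) = pmf \<zeta> (x, c)"
    if "c \<in> set_pmf (map_pmf snd \<zeta>)" for x c
  proof -
    have "?h -` {(x, g c)} \<inter> set_pmf \<zeta> = {(x, c)} \<inter> set_pmf \<zeta>"
      using inj that by (force simp: inj_on_def)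
    then have "measure_pmf.prob \<zeta> (?h -` {(x, g c)}) = measure_pmf.prob \<zeta> {(x, c)}"
      by (metis measure_Int_set_pmf)
    then show ?thesis
      by (simp add: pmf_map measure_pmf_single)
  qed
  have type_h: "type_of (map_pmf ?h \<zeta>) i (g c) = type_of \<zeta> i c"
    if "c \<in> set_pmf (map_pmf snd \<zeta>)" for i c
    using that by (simp add: type_of_eq_sum pmf_map_snd_eq_sum pmf_h)
  have snd_h: "map_pmf snd (map_pmf ?h \<zeta>) = map_pmf g (map_pmf snd \<zeta>)"
    by (simp add: map_pmf_comp case_prod_beta)
  have "measure_pmf.expectation (map_pmf snd (map_pmf ?h \<zeta>)) (\<lambda>c. (type_of (map_pmf ?h \<zeta>) i c)\<^sup>2)
      = measure_pmf.expectation (map_pmf snd \<zeta>) (\<lambda>c. (type_of \<zeta> i c)\<^sup>2)" for i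
    unfolding snd_h integral_map_pmf
    by (rule integral_cong_AE) (simp_all add: type_h AE_measure_pmf_iff)
  then show ?thesis
    unfolding Ind_def by simp
qed

text \<open>The definition of robust only quantifies over label sets of naturals; an arbitrary
finite B is transported there injectively, which leaves the index unchanged.\<close>

lemma robust_Ind_refinement_le:
  fixes \<xi> :: "(('n::finite \<Rightarrow> bool) \<times> 'a) pmf" and \<xi>' :: "(('n \<Rightarrow> bool) \<times> 'a \<times> 'b) pmf"
  assumes rob: "robust \<delta> l \<xi>" and card: "card B \<le> l" and ref: "refinement \<xi> B \<xi>'"
  shows "Ind \<xi>' \<le> Ind \<xi> + \<delta>"
proof -
  have fin: "finite B" using ref by (simp add: refinement_def)
  then obtain f :: "'b \<Rightarrow> nat" where inj: "inj_on f B"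
    using finite_imp_inj_to_nat_seg by blast
  define \<xi>'' where "\<xi>'' = map_pmf (\<lambda>(x, c). (x, apsnd f c)) \<xi>'"
  have B_supp: "b \<in> B" if "(a, b) \<in> set_pmf (map_pmf snd \<xi>')" for a b
    using ref that by (force simp: refinement_def)
  have "refinement \<xi> (f ` B) \<xi>''"
    using ref fin unfolding refinement_def \<xi>''_def
    by (auto simp: map_pmf_comp case_prod_beta intro!: map_pmf_cong)
  moreover have "card (f ` B) \<le> l"
    using card card_image_le[OF fin] le_trans by blast
  ultimately have "Ind \<xi>'' \<le> Ind \<xi> + \<delta>"
    using rob fin unfolding robust_def by blast
  moreover have "inj_on (apsnd f) (set_pmf (map_pmf snd \<xi>'))"
  proof (rule inj_onI)
    fix c c' assume "c \<in> set_pmf (map_pmf snd \<xi>')" "c' \<in> set_pmf (map_pmf snd \<xi>')" "apsnd f c = apsnd f c'"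
    then show "c = c'"
      using inj B_supp by (cases c, cases c') (auto simp: inj_on_def)
  qed
  then have "Ind \<xi>'' = Ind \<xi>'"
    unfolding \<xi>''_def by (rule Ind_map_snd_inj)
  ultimately show ?thesis by simp
qed

lemma Ind_refinement_eq:
  fixes \<xi> :: "(('n::finite \<Rightarrow> bool) \<times> 'a) pmf" and \<xi>' :: "(('n \<Rightarrow> bool) \<times> 'a \<times> 'b) pmf"
  assumes ref: "refinement \<xi> B \<xi>'" and fin: "finite (set_pmf (map_pmf snd \<xi>'))"
  shows "Ind \<xi>' - Ind \<xi> = measure_pmf.expectation (pmf_of_set UNIV) (\<lambda>i.
           measure_pmf.expectation (map_pmf snd \<xi>') (\<lambda>c. (type_of \<xi>' i c - type_of \<xi> i (fst c))\<^sup>2))"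
proof -
  define \<eta> where "\<eta> = map_pmf snd \<xi>'"
  have proj: "map_pmf (\<lambda>(x, a, b). (x, a)) \<xi>' = \<xi>"
    using ref by (simp add: refinement_def)
  have marg: "map_pmf fst \<eta> = map_pmf snd \<xi>"
    unfolding \<eta>_def by (rule map_fst_snd_refinement[OF ref])
  have fin_\<eta>: "finite (set_pmf \<eta>)" and fin_\<xi>: "finite (set_pmf (map_pmf snd \<xi>))"
    using fin unfolding \<eta>_def marg[symmetric] by simp_all
  have pythagoras: "measure_pmf.expectation \<eta> (\<lambda>c. (type_of \<xi>' i c - type_of \<xi> i (fst c))\<^sup>2)
      = measure_pmf.expectation \<eta> (\<lambda>c. (type_of \<xi>' i c)\<^sup>2)
        - measure_pmf.expectation (map_pmf snd \<xi>) (\<lambda>a. (type_of \<xi> i a)\<^sup>2)" for i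
  proof -
    have cross: "measure_pmf.expectation \<eta> (\<lambda>c. type_of \<xi>' i c * type_of \<xi> i (fst c))
        = measure_pmf.expectation (map_pmf snd \<xi>) (\<lambda>a. (type_of \<xi> i a)\<^sup>2)"
    proof -
      have "measure_pmf.expectation \<eta> (\<lambda>c. type_of \<xi>' i c * type_of \<xi> i (fst c))
          = measure_pmf.expectation \<xi>' (\<lambda>p. if fst p i then type_of \<xi> i (fst (snd p)) else 0)"
        unfolding \<eta>_def using fin by (rule expectation_type_of_mult) simp
      also have "\<dots> = measure_pmf.expectation (map_pmf (\<lambda>(x, a, b). (x, a)) \<xi>')
                         (\<lambda>p. if fst p i then type_of \<xi> i (snd p) else 0)"
        unfolding integral_map_pmf by (rule Bochner_Integration.integral_cong) (auto split: prod.splits)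
      also have "\<dots> = measure_pmf.expectation \<xi> (\<lambda>p. if fst p i then type_of \<xi> i (snd p) else 0)"
        by (simp only: proj)
      also have "\<dots> = measure_pmf.expectation (map_pmf snd \<xi>) (\<lambda>a. type_of \<xi> i a * type_of \<xi> i a)"
        using fin_\<xi> by (rule expectation_type_of_mult[symmetric]) simp
      finally show ?thesis by (simp add: power2_eq_square)
    qed
    have "measure_pmf.expectation \<eta> (\<lambda>c. (type_of \<xi> i (fst c))\<^sup>2)
        = measure_pmf.expectation (map_pmf snd \<xi>) (\<lambda>a. (type_of \<xi> i a)\<^sup>2)"
      unfolding marg[symmetric] by simp
    moreover have "measure_pmf.expectation \<eta> (\<lambda>c. (type_of \<xi>' i c - type_of \<xi> i (fst c))\<^sup>2)
      = measure_pmf.expectation \<eta> (\<lambda>c. (type_of \<xi>' i c)\<^sup>2)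
        - 2 * measure_pmf.expectation \<eta> (\<lambda>c. type_of \<xi>' i c * type_of \<xi> i (fst c))
        + measure_pmf.expectation \<eta> (\<lambda>c. (type_of \<xi> i (fst c))\<^sup>2)"
    proof -
      have "(\<lambda>c. (type_of \<xi>' i c - type_of \<xi> i (fst c))\<^sup>2)
          = (\<lambda>c. (type_of \<xi>' i c)\<^sup>2 - 2 * (type_of \<xi>' i c * type_of \<xi> i (fst c)) + (type_of \<xi> i (fst c))\<^sup>2)"
        by (simp add: power2_diff algebra_simps)
      then show ?thesis
        by (simp add: integrable_measure_pmf_finite[OF fin_\<eta>])
    qed
    ultimately show ?thesis
      using cross by simp
  qed
  have "Ind \<xi>' - Ind \<xi> = measure_pmf.expectation (pmf_of_set UNIV) (\<lambda>i.
      measure_pmf.expectation \<eta> (\<lambda>c. (type_of \<xi>' i c)\<^sup>2)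
      - measure_pmf.expectation (map_pmf snd \<xi>) (\<lambda>a. (type_of \<xi> i a)\<^sup>2))"
    unfolding Ind_def \<eta>_def
    by (rule Bochner_Integration.integral_diff[symmetric]) (simp_all add: integrable_measure_pmf_finite)
  then show ?thesis
    unfolding \<eta>_def[symmetric] pythagoras .
qed

lemma d_EM_le_coupling:
  assumes "\<And>x y. 0 \<le> d x y" "map_pmf fst \<gamma> = P" "map_pmf snd \<gamma> = Q"
  shows "d_EM d P Q \<le> measure_pmf.expectation \<gamma> (\<lambda>(x, y). d x y)"
  unfolding d_EM_def
proof (rule cInf_lower)
  show "measure_pmf.expectation \<gamma> (\<lambda>(x, y). d x y)
      \<in> {measure_pmf.expectation \<gamma> (\<lambda>(x, y). d x y) | \<gamma>. map_pmf fst \<gamma> = P \<and> map_pmf snd \<gamma> = Q}"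
    using assms(2,3) by blast
  show "bdd_below {measure_pmf.expectation \<gamma> (\<lambda>(x, y). d x y) | \<gamma>. map_pmf fst \<gamma> = P \<and> map_pmf snd \<gamma> = Q}"
    by (rule bdd_belowI[where m = 0]) (auto intro!: integral_nonneg simp: assms(1) split: prod.splits)
qed

lemma d_l1_eq_expectation:
  assumes "finite (set_pmf \<eta>)"
  shows "d_l1 \<eta> x y = measure_pmf.expectation \<eta> (\<lambda>c. \<bar>x c - y c\<bar>)"
  using assms by (simp add: d_l1_def integral_measure_pmf_real[of "set_pmf \<eta>"] mult.commute)

lemma d_l1_type_of_flat_refinement:
  fixes \<xi> :: "(('n::finite \<Rightarrow> bool) \<times> 'a) pmf" and \<eta> :: "('a \<times> 'b) pmf"
  assumes "map_pmf fst \<eta> = map_pmf snd \<xi>" "finite (set_pmf \<eta>)"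
  shows "d_l1 \<eta> t (type_of (flat_refinement \<xi> \<eta>) i)
       = measure_pmf.expectation \<eta> (\<lambda>c. \<bar>t c - type_of \<xi> i (fst c)\<bar>)"
  unfolding d_l1_eq_expectation[OF assms(2)]
  by (rule integral_cong_AE) (auto simp: AE_measure_pmf_iff type_of_flat_refinement[OF assms(1)])

lemma expectation_abs_le_sqrt:
  fixes f :: "'a \<Rightarrow> real"
  assumes "finite (set_pmf p)"
  shows "measure_pmf.expectation p (\<lambda>x. \<bar>f x\<bar>) \<le> sqrt (measure_pmf.expectation p (\<lambda>x. (f x)\<^sup>2))"
proof (rule real_le_rsqrt)
  have "measure_pmf.variance p (\<lambda>x. \<bar>f x\<bar>)
      = measure_pmf.expectation p (\<lambda>x. \<bar>f x\<bar>\<^sup>2) - (measure_pmf.expectation p (\<lambda>x. \<bar>f x\<bar>))\<^sup>2"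
    by (intro measure_pmf.variance_eq integrable_measure_pmf_finite[OF assms])
  then show "(measure_pmf.expectation p (\<lambda>x. \<bar>f x\<bar>))\<^sup>2 \<le> measure_pmf.expectation p (\<lambda>x. (f x)\<^sup>2)"
    using measure_pmf.variance_positive[of p "\<lambda>x. \<bar>f x\<bar>"] by simp
qed

lemma expectation_expectation_abs_le_sqrt:
  fixes f :: "'a \<Rightarrow> 'b \<Rightarrow> real"
  assumes fin_p: "finite (set_pmf p)" and fin_q: "finite (set_pmf q)"
  shows "measure_pmf.expectation p (\<lambda>i. measure_pmf.expectation q (\<lambda>c. \<bar>f i c\<bar>))
    \<le> sqrt (measure_pmf.expectation p (\<lambda>i. measure_pmf.expectation q (\<lambda>c. (f i c)\<^sup>2)))"
proof -
  let ?g = "\<lambda>i. sqrt (measure_pmf.expectation q (\<lambda>c. (f i c)\<^sup>2))"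
  have "measure_pmf.expectation p (\<lambda>i. measure_pmf.expectation q (\<lambda>c. \<bar>f i c\<bar>))
      \<le> measure_pmf.expectation p ?g"
    using integrable_measure_pmf_finite[OF fin_p]
    by (intro integral_mono expectation_abs_le_sqrt[OF fin_q])
  also have "\<dots> \<le> sqrt (measure_pmf.expectation p (\<lambda>i. (?g i)\<^sup>2))"
    using expectation_abs_le_sqrt[OF fin_p, of ?g] by simp
  also have "(\<lambda>i. (?g i)\<^sup>2) = (\<lambda>i. measure_pmf.expectation q (\<lambda>c. (f i c)\<^sup>2))"
    by (simp add: integral_nonneg)
  finally show ?thesis .
qed

theorem lemma5p4:
  fixes \<mu> :: "('n::finite \<Rightarrow> bool) pmf"
    and \<xi> :: "(('n \<Rightarrow> bool) \<times> 'a) pmf"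
    and \<xi>' :: "(('n \<Rightarrow> bool) \<times> 'a \<times> 'b) pmf"
    and A :: "'a set" and B :: "'b set" and \<delta> :: real and l :: nat
  assumes "0 < \<delta>" "\<delta> < 1"
    and "detailing \<mu> A \<xi>"
    and "robust \<delta> l \<xi>"
    and "finite B" "card B \<le> l"
    and "refinement \<xi> B \<xi>'"
  shows "d_EM (d_l1 (map_pmf snd \<xi>')) (type_dist \<xi>')
           (type_dist (flat_refinement \<xi> (map_pmf snd \<xi>'))) \<le> sqrt \<delta>"
proof -
  note ref = assms(7)
  define \<eta> where "\<eta> = map_pmf snd \<xi>'"
  have marg: "map_pmf fst \<eta> = map_pmf snd \<xi>"
    unfolding \<eta>_def by (rule map_fst_snd_refinement[OF ref])
  have fin: "finite (set_pmf \<eta>)"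
    unfolding \<eta>_def by (rule finite_set_pmf_snd_refinement[OF assms(3) ref])
  have "d_EM (d_l1 \<eta>) (type_dist \<xi>') (type_dist (flat_refinement \<xi> \<eta>))
      \<le> measure_pmf.expectation (pmf_of_set UNIV)
           (\<lambda>i. d_l1 \<eta> (type_of \<xi>' i) (type_of (flat_refinement \<xi> \<eta>) i))"
    using d_EM_le_coupling[of "d_l1 \<eta>"
        "map_pmf (\<lambda>i. (type_of \<xi>' i, type_of (flat_refinement \<xi> \<eta>) i)) (pmf_of_set UNIV)"]
    by (simp add: d_l1_def sum_nonneg type_dist_def map_pmf_comp)
  also have "\<dots> = measure_pmf.expectation (pmf_of_set UNIV) (\<lambda>i.
      measure_pmf.expectation \<eta> (\<lambda>c. \<bar>type_of \<xi>' i c - type_of \<xi> i (fst c)\<bar>))"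
    by (simp add: d_l1_type_of_flat_refinement[OF marg fin])
  also have "\<dots> \<le> sqrt (Ind \<xi>' - Ind \<xi>)"
    unfolding Ind_refinement_eq[OF ref fin[unfolded \<eta>_def]] \<eta>_def[symmetric]
    by (rule expectation_expectation_abs_le_sqrt[OF _ fin]) simp
  also have "\<dots> \<le> sqrt \<delta>"
    using robust_Ind_refinement_le[OF assms(4,6) ref] by simp
  finally show ?thesis
    unfolding \<eta>_def .
qed

end
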